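(* Let $P,Q,R\in\mathbb P_d$, $U_P:=\operatorname{Pol}(P^{1/2}R^{1/2})$, $U_Q:=\operatorname{Pol}(Q^{1/2}R^{1/2})$, and let $|\Omega\rangle:=\sum_{i=1}^d|i\rangle\otimes|i\rangle\in\mathbb C^d\otimes\mathbb C^d$. Define the purifications $|P_{U_P^\top}\rangle:=(P^{1/2}\otimes U_P^\top)|\Omega\rangle$ and $|Q_{U_Q^\top}\rangle:=(Q^{1/2}\otimes U_Q^\top)|\Omega\rangle$ (so that the partial trace over the second factor of $|P_{U_P^\top}\rangle\langle P_{U_P^\top}|$ is $P$, and similarly for $Q$). Then $$\operatorname{F}_R(P,Q)=\big\langle P_{U_P^\top},\,Q_{U_Q^\top}\big\rangle,$$ where the inner product is conjugate-linear in the first argument.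
   Context: $\mathbb P_d$ is the set of $d\times d$ complex positive definite matrices; $\operatorname{Pol}(M):=M(M^*M)^{-1/2}$ is the unitary polar factor of an invertible $M$, and $^\top$ denotes transpose in the standard basis. The generalized fidelity is $\operatorname{F}_R(P,Q):=\operatorname{Tr}\big[\sqrt{R^{1/2}PR^{1/2}}\,R^{-1}\sqrt{R^{1/2}QR^{1/2}}\big]$. *)

theory Defs
  imports "HOL-Analysis.Analysis"
begin

text \<open>Complex d x d matrices are rendered as complex^'n^'n with 'n a finite index type
  (d = CARD('n)). The tensor product space C^d (x) C^d is complex^('n \<times> 'n).\<close>

definition cadj :: "complex^'n^'m \<Rightarrow> complex^'m^'n" where
  "cadj A = (\<chi> i j. cnj (A $ j $ i))"

definition cinner :: "complex^'n \<Rightarrow> complex^'n \<Rightarrow> complex" where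
  "cinner x y = (\<Sum>i\<in>UNIV. cnj (x $ i) * y $ i)"

definition hermitian :: "complex^'n^'n \<Rightarrow> bool" where
  "hermitian A \<longleftrightarrow> cadj A = A"

definition psd :: "complex^'n^'n \<Rightarrow> bool" where
  "psd A \<longleftrightarrow> hermitian A \<and> (\<forall>x. Re (cinner x (A *v x)) \<ge> 0)"

definition posdef :: "complex^'n^'n \<Rightarrow> bool" where
  "posdef A \<longleftrightarrow> hermitian A \<and> (\<forall>x. x \<noteq> 0 \<longrightarrow> Re (cinner x (A *v x)) > 0)"

definition msqrt :: "complex^'n^'n \<Rightarrow> complex^'n^'n" where
  "msqrt A = (THE B. psd B \<and> B ** B = A)"

definition Pol :: "complex^'n^'n \<Rightarrow> complex^'n^'n" where
  "Pol M = M ** matrix_inv (msqrt (cadj M ** M))"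

definition fidR :: "complex^'n^'n \<Rightarrow> complex^'n^'n \<Rightarrow> complex^'n^'n \<Rightarrow> complex" where
  "fidR R P Q = trace (msqrt (msqrt R ** P ** msqrt R) ** matrix_inv R
                        ** msqrt (msqrt R ** Q ** msqrt R))"

definition kron :: "complex^'n^'n \<Rightarrow> complex^'n^'n \<Rightarrow> complex^('n \<times> 'n)^('n \<times> 'n)" where
  "kron A B = (\<chi> p q. A $ fst p $ fst q * B $ snd p $ snd q)"

definition Omega :: "complex^('n::finite \<times> 'n)" where
  "Omega = (\<chi> p. if fst p = snd p then 1 else 0)"

end

theory Submission
  imports Defs
begin

text \<open>Write \<open>a, q, r\<close> for the square roots of \<open>P, Q, R\<close>. Since \<open>(a r)\<^sup>* (a r) = r P r\<close>, the
  polar factor is \<open>U\<^sub>P = a r (r P r)^(-1/2)\<close>, and likewise \<open>U\<^sub>Q = q r (r Q r)^(-1/2)\<close>.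
  The vector \<open>(A \<otimes> U\<^sup>T) \<Omega>\<close> is the vectorisation of \<open>A U\<close>, so the inner product of the
  purifications is \<open>tr ((a U\<^sub>P)\<^sup>* (q U\<^sub>Q)) = tr ((r P r)^(-1/2) r P Q r (r Q r)^(-1/2))\<close>.
  The identities \<open>(r P r)^(-1/2) r P = (r P r)^(1/2) r\<^sup>-\<^sup>1\<close> and
  \<open>Q r (r Q r)^(-1/2) = r\<^sup>-\<^sup>1 (r Q r)^(1/2)\<close> turn this into
  \<open>tr ((r P r)^(1/2) R\<^sup>-\<^sup>1 (r Q r)^(1/2)) = F\<^sub>R(P, Q)\<close>.

  The bulk of the work is that \<open>msqrt\<close>, defined by a definite description, really is the
  positive square root; its existence rests on the spectral theorem for Hermitian matrices.\<close>

lemma cadj_component [simp]: "cadj A $ i $ j = cnj (A $ j $ i)"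
  by (simp add: cadj_def)

lemma cadj_cadj [simp]: "cadj (cadj A) = A"
  by (simp add: vec_eq_iff)

lemma cadj_mat [simp]: "cadj (mat c) = mat (cnj c)"
  by (simp add: vec_eq_iff mat_def)

lemma cadj_diff: "cadj (A - B) = cadj A - cadj B"
  by (simp add: vec_eq_iff)

lemma cadj_matrix_mult: "cadj (A ** B) = cadj B ** cadj A"
  by (simp add: vec_eq_iff matrix_matrix_mult_def mult.commute)

lemma cnj_cinner: "cnj (cinner x y) = cinner y x"
  by (simp add: cinner_def mult.commute)

lemma cinner_adjoint: "cinner x (A *v y) = cinner (cadj A *v x) y"
proof -
  have "cinner x (A *v y) = (\<Sum>i\<in>UNIV. \<Sum>j\<in>UNIV. cnj (x$i) * A$i$j * y$j)"
    unfolding cinner_def matrix_vector_mult_def by (simp add: sum_distrib_left mult.assoc)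
  also have "\<dots> = (\<Sum>j\<in>UNIV. \<Sum>i\<in>UNIV. cnj (x$i) * A$i$j * y$j)"
    by (rule sum.swap)
  also have "\<dots> = cinner (cadj A *v x) y"
    unfolding cinner_def matrix_vector_mult_def
    by (simp add: sum_distrib_right sum_distrib_left mult.commute mult.left_commute)
  finally show ?thesis .
qed

lemma hermitian_cinner_swap: "hermitian A \<Longrightarrow> cinner x (A *v y) = cinner (A *v x) y"
  by (simp add: cinner_adjoint hermitian_def)

lemma hermitian_quadratic_form_real: "hermitian A \<Longrightarrow> Im (cinner x (A *v x)) = 0"
  by (metis Reals_cnj_iff cnj_cinner complex_is_Real_iff hermitian_cinner_swap)

lemma cinner_self: "cinner x x = of_real ((norm x)\<^sup>2)"
proof -
  have "cinner x x = of_real (\<Sum>i\<in>UNIV. (cmod (x$i))\<^sup>2)"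
    unfolding cinner_def of_real_sum by (metis complex_norm_square mult.commute)
  then show ?thesis
    by (simp add: norm_vec_def L2_set_def sum_nonneg)
qed

lemma inner_eq_Re_cinner: "inner x y = Re (cinner x y)"
  by (simp add: inner_vec_def cinner_def inner_complex_def)

lemma cinner_zero_right [simp]: "cinner z 0 = 0"
  by (simp add: cinner_def)

lemma cinner_add_left: "cinner (x + y) z = cinner x z + cinner y z"
  by (simp add: cinner_def distrib_right sum.distrib)

lemma cinner_add_right: "cinner z (x + y) = cinner z x + cinner z y"
  by (simp add: cinner_def distrib_left sum.distrib)

lemma cinner_diff_right: "cinner z (x - y) = cinner z x - cinner z y"
  by (simp add: cinner_def right_diff_distrib sum_subtractf)

lemma vector_scaleR_complex_component: "(t *\<^sub>R x) $ i = of_real t * (x $ i :: complex)"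
  unfolding vector_scaleR_component by (rule scaleR_conv_of_real)

lemma scale_of_real_eq_scaleR: "(of_real t :: complex) *s x = t *\<^sub>R x"
  by (simp add: vec_eq_iff vector_scaleR_complex_component del: vector_scaleR_component)

lemma cinner_scaleR_left: "cinner (t *\<^sub>R x) z = of_real t * cinner x z"
  by (simp add: cinner_def sum_distrib_left vector_scaleR_complex_component mult.assoc
      del: vector_scaleR_component)

lemma cinner_scaleR_right: "cinner z (t *\<^sub>R x) = of_real t * cinner z x"
  by (simp add: cinner_def sum_distrib_left vector_scaleR_complex_component mult.left_commute
      del: vector_scaleR_component)

lemma cinner_scale_left: "cinner (c *s x) z = cnj c * cinner x z"
  by (simp add: cinner_def sum_distrib_left mult.assoc)

lemma cinner_scale_right: "cinner z (c *s x) = c * cinner z x"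
  by (simp add: cinner_def sum_distrib_left mult.left_commute)

lemma matrix_vector_mult_scaleR_complex: "(A :: complex^'n^'m) *v (t *\<^sub>R x) = t *\<^sub>R (A *v x)"
  by (simp add: vec_eq_iff matrix_vector_mult_def vector_scaleR_complex_component
      sum_distrib_left mult.left_commute del: vector_scaleR_component)

lemma matrix_diff_ldistrib: "(A :: 'a::ring_1^'n^'m) ** (B - C) = A ** B - A ** C"
  by (simp add: vec_eq_iff matrix_matrix_mult_def right_diff_distrib sum_subtractf)

lemma matrix_diff_rdistrib: "((A :: 'a::ring_1^'n^'m) - B) ** C = A ** C - B ** C"
  by (simp add: vec_eq_iff matrix_matrix_mult_def left_diff_distrib sum_subtractf)

lemma matrix_eq_iff_columns: "X = Y \<longleftrightarrow> (\<forall>i. column i X = column i Y)"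
  by (auto simp: vec_eq_iff column_def)

lemma column_matrix_mult: "column k (B ** X) = B *v column k X"
  by (simp add: vec_eq_iff column_def matrix_matrix_mult_def matrix_vector_mult_def)

lemma cadj_matrix_mult_component: "(cadj X ** Y) $ i $ j = cinner (column i X) (column j Y)"
  by (simp add: cinner_def column_def matrix_matrix_mult_def)

lemma trace_cadj_mult: "trace (cadj X ** Y) = (\<Sum>k\<in>UNIV. cinner (column k X) (column k Y))"
  by (simp add: trace_def cadj_matrix_mult_component)

lemma trace_cadj_self_eq_0: "trace (cadj X ** X) = 0 \<longleftrightarrow> X = 0"
proof
  assume "trace (cadj X ** X) = 0"
  then have "(\<Sum>k\<in>UNIV. (norm (column k X))\<^sup>2) = 0"
    unfolding trace_cadj_mult cinner_self of_real_sum[symmetric] of_real_eq_0_iff .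
  then have "column k X = 0" for k
    by (simp add: sum_nonneg_eq_0_iff)
  then show "X = 0"
    by (simp add: vec_eq_iff column_def)
qed (simp add: trace_def matrix_matrix_mult_def)

section \<open>Uniqueness of positive semidefinite square roots\<close>

lemma nonneg_quadratic_imp_linear_coeff_0:
  fixes a b :: real
  assumes nonneg: "\<And>t. 0 \<le> 2*t*a + t\<^sup>2*b"
  shows "a = 0"
proof (rule ccontr)
  assume "a \<noteq> 0"
  define s where "s = 1 / (\<bar>b\<bar> + 1)"
  have "s > 0" and "s * b < 1"
    by (auto simp: s_def field_simps abs_if)
  then have "a\<^sup>2 * s * (s*b - 2) < 0"
    using \<open>a \<noteq> 0\<close> by (simp add: mult_pos_neg)
  moreover have "2*(- a * s)*a + (- a * s)\<^sup>2*b = a\<^sup>2 * s * (s*b - 2)"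
    by (simp add: power2_eq_square algebra_simps)
  ultimately show False
    using nonneg[of "- a * s"] by linarith
qed

text \<open>A Hermitian form that vanishes at \<open>x\<close> and is nonnegative on the line through \<open>x\<close>
  in direction \<open>M x\<close> has \<open>x\<close> in its kernel: along that line it is
  \<open>2 t \<parallel>M x\<parallel>\<^sup>2 + O(t\<^sup>2)\<close>.\<close>
lemma hermitian_kernel_of_nonneg_line:
  assumes herm: "hermitian M"
    and nonneg: "\<And>t::real. 0 \<le> Re (cinner (x + t *\<^sub>R (M *v x)) (M *v (x + t *\<^sub>R (M *v x))))"
    and null: "Re (cinner x (M *v x)) = 0"
  shows "M *v x = 0"
proof -
  define y where "y = M *v x"
  have "cinner x (M *v y) = cinner y y"
    by (simp add: y_def hermitian_cinner_swap[OF herm])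
  then have "Re (cinner (x + t *\<^sub>R y) (M *v (x + t *\<^sub>R y)))
      = 2*t*(norm y)\<^sup>2 + t\<^sup>2 * Re (cinner y (M *v y))" for t
    using null
    by (simp add: y_def[symmetric] matrix_vector_mult_scaleR_complex
        cinner_add_left cinner_add_right cinner_scaleR_left cinner_scaleR_right cinner_self
        power2_eq_square algebra_simps)
  then have "(norm y)\<^sup>2 = 0"
    using nonneg by (intro nonneg_quadratic_imp_linear_coeff_0[of _ "Re (cinner y (M *v y))"])
      (simp add: y_def)
  then show ?thesis by (simp add: y_def)
qed

lemma psd_kernel: "psd M \<Longrightarrow> Re (cinner x (M *v x)) = 0 \<Longrightarrow> M *v x = 0"
  by (rule hermitian_kernel_of_nonneg_line) (auto simp: psd_def)

lemma psd_trace_congruence_nonneg: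
  assumes "psd B"
  shows "0 \<le> Re (trace (cadj D ** (B ** D)))"
  using assms unfolding trace_cadj_mult column_matrix_mult Re_sum psd_def
  by (simp add: sum_nonneg)

lemma psd_trace_congruence_eq_0:
  assumes psd: "psd B" and zero: "Re (trace (cadj D ** (B ** D))) = 0"
  shows "B ** D = 0"
proof -
  have null: "Re (cinner (column k D) (B *v column k D)) = 0" for k
    using zero psd unfolding trace_cadj_mult column_matrix_mult Re_sum psd_def
    by (subst (asm) sum_nonneg_eq_0_iff) auto
  have "column k (B ** D) = 0" for k
    by (simp add: column_matrix_mult psd_kernel[OF psd null])
  then show ?thesis
    by (simp add: vec_eq_iff column_def)
qed

text \<open>With \<open>D = B - C\<close> one has \<open>B D + D C = B\<^sup>2 - C\<^sup>2 = 0\<close>, so the two nonnegative traces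
  \<open>tr (D B D)\<close> and \<open>tr (D C D)\<close> add up to zero.\<close>
lemma psd_square_root_unique:
  fixes B C :: "complex^'n^'n"
  assumes psdB: "psd B" and psdC: "psd C" and squares: "B ** B = C ** C"
  shows "B = C"
proof -
  define D where "D = B - C"
  have herm: "cadj D = D"
    using psdB psdC by (simp add: D_def cadj_diff psd_def hermitian_def)
  have "B ** D + D ** C = 0"
    using squares by (simp add: D_def matrix_diff_ldistrib matrix_diff_rdistrib matrix_mul_assoc)
  then have "trace (D ** (B ** D)) + trace (D ** (D ** C)) = 0"
    by (metis matrix_add_ldistrib times0_right trace_0 mat_0 trace_add)
  moreover have "trace (D ** (D ** C)) = trace (D ** (C ** D))"
    by (metis matrix_mul_assoc trace_mul_sym)
  ultimately have "Re (trace (cadj D ** (B ** D))) + Re (trace (cadj D ** (C ** D))) = 0"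
    by (metis herm plus_complex.sel(1) zero_complex.sel(1))
  then have "Re (trace (cadj D ** (B ** D))) = 0" "Re (trace (cadj D ** (C ** D))) = 0"
    using psd_trace_congruence_nonneg[OF psdB, of D] psd_trace_congruence_nonneg[OF psdC, of D]
    by linarith+
  then have "B ** D = 0" "C ** D = 0"
    using psd_trace_congruence_eq_0 psdB psdC by blast+
  then have "D ** D = 0"
    by (simp add: D_def matrix_diff_rdistrib)
  then have "cadj D ** D = 0"
    by (simp add: herm)
  then show ?thesis
    using trace_cadj_self_eq_0[of D] by (simp add: D_def trace_def)
qed

section \<open>The spectral theorem and existence of square roots\<close>

lemma mat_matrix_vector_mult: "(mat c :: complex^'n^'n) *v x = c *s x"
  by (simp add: vec_eq_iff matrix_vector_mult_def mat_def if_distrib[of "\<lambda>x. x * _"]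
      cong: if_cong)

text \<open>An eigenvector is found by maximising the quadratic form on the unit sphere of \<open>S\<close>:
  at a maximiser \<open>x\<^sub>0\<close> with value \<open>l\<close>, the form of \<open>l I - A\<close> is nonnegative on \<open>S\<close>
  and vanishes at \<open>x\<^sub>0\<close>.\<close>
lemma hermitian_invariant_subspace_eigenvector:
  fixes A :: "complex^'n^'n"
  assumes herm: "hermitian A" and S: "subspace S" and inv: "\<And>x. x \<in> S \<Longrightarrow> A *v x \<in> S"
    and "y \<in> S" "y \<noteq> 0"
  shows "\<exists>x\<in>S. norm x = 1 \<and> (\<exists>\<mu>. A *v x = \<mu> *s x)"
proof -
  define C where "C = S \<inter> sphere 0 1"
  have "compact C"
    unfolding C_def by (intro closed_Int_compact closed_subspace S compact_sphere)
  moreover have "(1 / norm y) *\<^sub>R y \<in> C"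
    using \<open>y \<in> S\<close> \<open>y \<noteq> 0\<close> S by (simp add: C_def subspace_scale)
  moreover have "continuous_on C (\<lambda>x. Re (cinner x (A *v x)))"
    unfolding cinner_def matrix_vector_mult_def by (intro continuous_intros)
  ultimately obtain x0 where "x0 \<in> C"
    and max: "\<And>z. z \<in> C \<Longrightarrow> Re (cinner z (A *v z)) \<le> Re (cinner x0 (A *v x0))"
    using continuous_attains_sup[of C] by blast
  define l where "l = Re (cinner x0 (A *v x0))"
  have x0: "x0 \<in> S" "norm x0 = 1"
    using \<open>x0 \<in> C\<close> by (auto simp: C_def)
  have bound: "Re (cinner z (A *v z)) \<le> l * (norm z)\<^sup>2" if "z \<in> S" for z
  proof (cases "z = 0")
    case False
    define w where "w = (1 / norm z) *\<^sub>R z"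
    have "w \<in> C"
      using False \<open>z \<in> S\<close> S by (simp add: w_def C_def subspace_scale)
    then have "Re (cinner w (A *v w)) \<le> l"
      using max by (simp add: l_def)
    moreover have "Re (cinner w (A *v w)) = Re (cinner z (A *v z)) / (norm z)\<^sup>2"
      by (simp add: w_def matrix_vector_mult_scaleR_complex cinner_scaleR_left
          cinner_scaleR_right power2_eq_square)
    ultimately show ?thesis
      using False by (simp add: field_simps)
  qed (simp add: cinner_def)
  define M where "M = mat (of_real l) - A"
  have form_M: "Re (cinner z (M *v z)) = l * (norm z)\<^sup>2 - Re (cinner z (A *v z))" for z
    by (simp add: M_def matrix_vector_mult_diff_rdistrib mat_matrix_vector_mult cinner_diff_right
        cinner_scale_right cinner_self)
  have M_S: "M *v x \<in> S" if "x \<in> S" for x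
    using that S inv
    by (simp add: M_def matrix_vector_mult_diff_rdistrib mat_matrix_vector_mult
        scale_of_real_eq_scaleR subspace_diff subspace_scale)
  have "M *v x0 = 0"
  proof (rule hermitian_kernel_of_nonneg_line)
    show "hermitian M"
      using herm by (simp add: M_def hermitian_def cadj_diff)
    show "0 \<le> Re (cinner (x0 + t *\<^sub>R (M *v x0)) (M *v (x0 + t *\<^sub>R (M *v x0))))" for t
      using x0 M_S S bound by (simp add: form_M subspace_add subspace_scale)
    show "Re (cinner x0 (M *v x0)) = 0"
      using x0 by (simp add: form_M l_def)
  qed
  then have "A *v x0 = of_real l *s x0"
    by (simp add: M_def matrix_vector_mult_diff_rdistrib mat_matrix_vector_mult)
  then show ?thesis
    using x0 by blast
qed

text \<open>Complex orthogonality to \<open>v\<close> is real orthogonality to both \<open>v\<close> and \<open>\<i> v\<close>.\<close>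
lemma cinner_orthogonal_vector_exists:
  fixes V :: "(complex^'n) set"
  assumes "finite V" and "card V < CARD('n)"
  obtains y where "y \<noteq> 0" and "\<And>v. v \<in> V \<Longrightarrow> cinner v y = 0"
proof -
  define T where "T = V \<union> (\<lambda>v. \<i> *s v) ` V"
  have "finite T"
    using assms by (simp add: T_def)
  have "card T \<le> card V + card V"
    unfolding T_def by (metis card_Un_le card_image_le[OF \<open>finite V\<close>] add_left_mono order_trans)
  then have "dim T < DIM(complex^'n)"
    using assms dim_le_card'[OF \<open>finite T\<close>] by simp
  then obtain y :: "complex^'n" where "y \<noteq> 0" and orth: "\<And>z. z \<in> span T \<Longrightarrow> orthogonal y z"
    using orthogonal_to_subspace_exists by blast
  have "cinner v y = 0" if "v \<in> V" for v
  proof -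
    have "inner y v = 0" "inner y (\<i> *s v) = 0"
      using that orth by (auto simp: T_def orthogonal_def intro: span_base)
    then show ?thesis
      by (simp add: inner_eq_Re_cinner cinner_scale_right complex_eq_iff
          flip: cnj_cinner[of v y])
  qed
  with \<open>y \<noteq> 0\<close> show thesis by (rule that)
qed

lemma hermitian_orthonormal_eigenvectors:
  fixes A :: "complex^'n^'n" and K :: "'n set"
  assumes herm: "hermitian A"
  shows "\<exists>v. (\<forall>i\<in>K. \<forall>j\<in>K. cinner (v i) (v j) = (if i = j then 1 else 0))
           \<and> (\<forall>i\<in>K. \<exists>\<mu>. A *v v i = \<mu> *s v i)"
  using finite[of K]
proof (induction K rule: finite_induct)
  case (insert a K)
  then obtain v where orthonormal: "\<forall>i\<in>K. \<forall>j\<in>K. cinner (v i) (v j) = (if i = j then 1 else 0)"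
    and eigen: "\<forall>i\<in>K. \<exists>\<mu>. A *v v i = \<mu> *s v i"
    by blast
  define S where "S = {x. \<forall>i\<in>K. cinner (v i) x = 0}"
  have "subspace S"
    by (simp add: S_def subspace_def cinner_add_right cinner_scaleR_right)
  moreover have "A *v x \<in> S" if "x \<in> S" for x
  proof -
    have "cinner (v i) (A *v x) = 0" if "i \<in> K" for i
      using eigen \<open>x \<in> S\<close> \<open>i \<in> K\<close> unfolding S_def
      by (auto simp: hermitian_cinner_swap[OF herm] cinner_scale_left)
    then show ?thesis by (simp add: S_def)
  qed
  moreover obtain y where "y \<noteq> 0" "y \<in> S"
  proof -
    have "card K < CARD('n)"
      using \<open>a \<notin> K\<close> by (metis UNIV_I finite psubset_card_mono psubsetI subset_UNIV)
    then have "card (v ` K) < CARD('n)"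
      using card_image_le[OF \<open>finite K\<close>, of v] by linarith
    then obtain y where "y \<noteq> 0" "\<And>w. w \<in> v ` K \<Longrightarrow> cinner w y = 0"
      using cinner_orthogonal_vector_exists[OF finite_imageI[OF \<open>finite K\<close>]] by blast
    then show thesis
      using that by (auto simp: S_def)
  qed
  ultimately obtain x where "x \<in> S" "norm x = 1" and eigen_x: "\<exists>\<mu>. A *v x = \<mu> *s x"
    using hermitian_invariant_subspace_eigenvector[OF herm] by blast
  then have unit: "cinner x x = 1" and orth: "\<And>i. i \<in> K \<Longrightarrow> cinner (v i) x = 0"
    by (simp_all add: cinner_self S_def)
  then have orth': "\<And>i. i \<in> K \<Longrightarrow> cinner x (v i) = 0"
    by (metis cnj_cinner complex_cnj_zero)
  define w where "w = v(a := x)"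
  have "cinner (w i) (w j) = (if i = j then 1 else 0)"
    if "i \<in> insert a K" "j \<in> insert a K" for i j
    using that orthonormal unit orth orth' \<open>a \<notin> K\<close> by (auto simp: w_def)
  moreover have "\<exists>\<mu>. A *v w i = \<mu> *s w i" if "i \<in> insert a K" for i
    using that eigen eigen_x by (auto simp: w_def)
  ultimately show ?case
    by blast
qed simp

definition diag :: "('n \<Rightarrow> complex) \<Rightarrow> complex^'n^'n" where
  "diag f = (\<chi> i j. if i = j then f i else 0)"

lemma diag_mult: "diag f ** diag g = diag (\<lambda>i. f i * g i)"
  unfolding diag_def matrix_matrix_mult_def
  by (auto simp: vec_eq_iff if_distrib[of "\<lambda>x. x * _"] cong: if_cong)

lemma cadj_diag: "cadj (diag f) = diag (\<lambda>i. cnj (f i))"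
  by (simp add: diag_def vec_eq_iff)

lemma column_mult_diag: "column i (X ** diag f) = f i *s column i X"
  by (simp add: column_def diag_def matrix_matrix_mult_def vec_eq_iff mult.commute
      if_distrib[of "\<lambda>x. _ * x"] cong: if_cong)

lemma Re_cinner_diag:
  "Re (cinner x (diag (\<lambda>i. of_real (f i)) *v x)) = (\<Sum>i\<in>UNIV. f i * (cmod (x $ i))\<^sup>2)"
  by (simp add: cinner_def diag_def matrix_vector_mult_def if_distrib[of "\<lambda>x. x * _"]
      cong: if_cong)
    (simp add: cmod_def power2_eq_square algebra_simps)

lemma unitary_congruence_mult:
  assumes "cadj U ** U = mat 1"
  shows "(U ** X ** cadj U) ** (U ** Y ** cadj U) = U ** (X ** Y) ** cadj U"
proof -
  have "(U ** X ** cadj U) ** (U ** Y ** cadj U) = U ** X ** (cadj U ** U) ** Y ** cadj U"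
    by (simp only: matrix_mul_assoc)
  then show ?thesis
    by (simp add: assms matrix_mul_assoc)
qed

lemma hermitian_unitary_diagonalization:
  fixes A :: "complex^'n^'n"
  assumes herm: "hermitian A"
  obtains U :: "complex^'n^'n" and \<mu> :: "'n \<Rightarrow> real"
  where "cadj U ** U = mat 1" "A = U ** diag (\<lambda>i. of_real (\<mu> i)) ** cadj U"
proof -
  obtain v :: "'n \<Rightarrow> complex^'n"
    where orthonormal: "\<And>i j. cinner (v i) (v j) = (if i = j then 1 else 0)"
    and eigen: "\<And>i. \<exists>\<mu>. A *v v i = \<mu> *s v i"
    using hermitian_orthonormal_eigenvectors[OF herm, of UNIV] by auto
  define \<mu> where "\<mu> i = Re (cinner (v i) (A *v v i))" for i
  have eigen_real: "A *v v i = of_real (\<mu> i) *s v i" for i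
  proof -
    obtain m where m: "A *v v i = m *s v i"
      using eigen by blast
    then have "cinner (v i) (A *v v i) = m"
      by (simp add: cinner_scale_right orthonormal)
    then have "m = of_real (\<mu> i)"
      using hermitian_quadratic_form_real[OF herm, of "v i"] by (simp add: \<mu>_def complex_eq_iff)
    with m show ?thesis by simp
  qed
  define U :: "complex^'n^'n" where "U = (\<chi> a i. v i $ a)"
  have UU: "cadj U ** U = mat 1"
    using orthonormal by (simp add: vec_eq_iff cadj_matrix_mult_component U_def column_def mat_def)
  then have UU': "U ** cadj U = mat 1"
    by (simp add: matrix_left_right_inverse)
  have "column i U = v i" for i
    by (simp add: U_def column_def)
  then have "column i (A ** U) = column i (U ** diag (\<lambda>i. of_real (\<mu> i)))" for i
    by (simp only: column_matrix_mult[of i A] column_mult_diag eigen_real)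
  then have "A ** U = U ** diag (\<lambda>i. of_real (\<mu> i))"
    by (simp add: matrix_eq_iff_columns)
  then have "A ** (U ** cadj U) = U ** diag (\<lambda>i. of_real (\<mu> i)) ** cadj U"
    by (simp only: matrix_mul_assoc)
  then have "A = U ** diag (\<lambda>i. of_real (\<mu> i)) ** cadj U"
    by (simp add: UU')
  with UU show thesis by (rule that)
qed

lemma psd_diag_congruence:
  assumes "\<And>i. 0 \<le> f i"
  shows "psd (U ** diag (\<lambda>i. of_real (f i)) ** cadj U)"
  unfolding psd_def
proof
  show "hermitian (U ** diag (\<lambda>i. of_real (f i)) ** cadj U)"
    by (simp add: hermitian_def cadj_matrix_mult cadj_diag matrix_mul_assoc)
  show "\<forall>x. 0 \<le> Re (cinner x ((U ** diag (\<lambda>i. of_real (f i)) ** cadj U) *v x))"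
  proof
    fix x
    have "cinner x ((U ** diag (\<lambda>i. of_real (f i)) ** cadj U) *v x)
        = cinner (cadj U *v x) (diag (\<lambda>i. of_real (f i)) *v (cadj U *v x))"
      by (simp only: matrix_vector_mul_assoc[symmetric] cinner_adjoint[of x U])
    then show "0 \<le> Re (cinner x ((U ** diag (\<lambda>i. of_real (f i)) ** cadj U) *v x))"
      using assms by (simp add: Re_cinner_diag sum_nonneg)
  qed
qed

lemma psd_square_root_exists:
  fixes A :: "complex^'n^'n"
  assumes psd: "psd A"
  obtains B where "psd B" "B ** B = A"
proof -
  have "hermitian A"
    using psd by (simp add: psd_def)
  then obtain U :: "complex^'n^'n" and \<mu> :: "'n \<Rightarrow> real"
    where UU: "cadj U ** U = mat 1" and A: "A = U ** diag (\<lambda>i. of_real (\<mu> i)) ** cadj U"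
    by (rule hermitian_unitary_diagonalization)
  have "cadj U ** A ** U = (cadj U ** U) ** diag (\<lambda>i. of_real (\<mu> i)) ** (cadj U ** U)"
    by (simp only: A matrix_mul_assoc)
  then have "cadj U ** (A ** U) = diag (\<lambda>i. of_real (\<mu> i))"
    by (simp add: UU matrix_mul_assoc)
  then have eigenvalue: "of_real (\<mu> i) = cinner (column i U) (A *v column i U)" for i
    using cadj_matrix_mult_component[of U "A ** U" i i] by (simp add: column_matrix_mult diag_def)
  have "0 \<le> \<mu> i" for i
  proof -
    have "0 \<le> Re (cinner (column i U) (A *v column i U))"
      using psd by (simp add: psd_def)
    then show ?thesis
      by (simp flip: eigenvalue)
  qed
  define B where "B = U ** diag (\<lambda>i. of_real (sqrt (\<mu> i))) ** cadj U"
  have "B ** B = U ** diag (\<lambda>i. of_real (sqrt (\<mu> i)) * of_real (sqrt (\<mu> i))) ** cadj U"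
    by (simp only: B_def unitary_congruence_mult[OF UU] diag_mult)
  also have "(\<lambda>i. of_real (sqrt (\<mu> i)) * of_real (sqrt (\<mu> i))) = (\<lambda>i. of_real (\<mu> i) :: complex)"
    using \<open>\<And>i. 0 \<le> \<mu> i\<close> by (simp flip: of_real_mult)
  finally have "B ** B = A"
    by (simp only: A)
  moreover have "psd B"
    unfolding B_def by (rule psd_diag_congruence) (simp add: \<open>\<And>i. 0 \<le> \<mu> i\<close>)
  ultimately show thesis
    using that by blast
qed

lemma msqrt_eq: "psd B \<Longrightarrow> B ** B = A \<Longrightarrow> msqrt A = B"
  unfolding msqrt_def by (rule the_equality) (auto intro: psd_square_root_unique)

lemma
  fixes A :: "complex^'n^'n"
  assumes "psd A"
  shows psd_msqrt: "psd (msqrt A)" and msqrt_square: "msqrt A ** msqrt A = A"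
proof -
  obtain B where "psd B" "B ** B = A"
    using psd_square_root_exists[OF assms] .
  moreover from this have "msqrt A = B"
    by (rule msqrt_eq)
  ultimately show "psd (msqrt A)" "msqrt A ** msqrt A = A"
    by simp_all
qed

lemma posdef_imp_psd:
  assumes "posdef A"
  shows "psd A"
  unfolding psd_def
proof (intro conjI allI)
  show "hermitian A"
    using assms by (simp add: posdef_def)
  show "0 \<le> Re (cinner x (A *v x))" for x
    using assms by (cases "x = 0") (auto simp: posdef_def cinner_def intro: less_imp_le)
qed

lemma hermitian_msqrt: "psd A \<Longrightarrow> cadj (msqrt A) = msqrt A"
  using psd_msqrt by (auto simp: psd_def hermitian_def)

lemma invertible_iff_kernel: "invertible (A :: 'a::field^'n^'n) \<longleftrightarrow> (\<forall>x. A *v x = 0 \<longrightarrow> x = 0)"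
  by (metis invertible_def matrix_left_invertible_ker matrix_left_right_inverse)

lemma posdef_kernel: "posdef A \<Longrightarrow> A *v x = 0 \<Longrightarrow> x = 0"
  by (force simp: posdef_def)

lemma invertible_msqrt:
  assumes "posdef A"
  shows "invertible (msqrt A)"
  unfolding invertible_iff_kernel
proof (intro allI impI)
  fix x
  assume "msqrt A *v x = 0"
  then have "A *v x = 0"
    using msqrt_square[OF posdef_imp_psd[OF assms]]
    by (metis matrix_vector_mul_assoc matrix_vector_mult_0_right)
  then show "x = 0"
    using posdef_kernel[OF assms] by blast
qed

lemma matrix_inv_inverse:
  assumes "invertible (A :: 'a::semiring_1^'n^'m)"
  shows matrix_inv_right: "A ** matrix_inv A = mat 1" and matrix_inv_left: "matrix_inv A ** A = mat 1"
  using someI_ex[OF assms[unfolded invertible_def]] by (simp_all add: matrix_inv_def)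

lemma matrix_inv_unique:
  fixes A B :: "'a::field^'n^'n"
  assumes "A ** B = mat 1"
  shows "matrix_inv A = B"
proof -
  have "invertible A"
    using assms matrix_left_right_inverse unfolding invertible_def by blast
  then have "matrix_inv A = matrix_inv A ** (A ** B)"
    by (simp add: assms)
  also have "\<dots> = B"
    by (simp add: matrix_mul_assoc matrix_inv_left[OF \<open>invertible A\<close>])
  finally show ?thesis .
qed

lemma matrix_inv_mult:
  fixes A B :: "'a::field^'n^'n"
  assumes "invertible A" "invertible B"
  shows "matrix_inv (A ** B) = matrix_inv B ** matrix_inv A"
proof (rule matrix_inv_unique)
  have "A ** B ** (matrix_inv B ** matrix_inv A) = A ** (B ** matrix_inv B) ** matrix_inv A"
    by (simp add: matrix_mul_assoc)
  then show "A ** B ** (matrix_inv B ** matrix_inv A) = mat 1"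
    by (simp add: matrix_inv_right assms)
qed

lemma cadj_matrix_inv:
  fixes X :: "complex^'n^'n"
  assumes "invertible X"
  shows "cadj (matrix_inv X) = matrix_inv (cadj X)"
proof -
  have "cadj X ** cadj (matrix_inv X) = cadj (matrix_inv X ** X)"
    by (simp add: cadj_matrix_mult)
  also have "\<dots> = mat 1"
    by (simp add: matrix_inv_left[OF assms])
  finally have "matrix_inv (cadj X) = cadj (matrix_inv X)"
    by (rule matrix_inv_unique)
  then show ?thesis ..
qed

lemma posdef_congruence:
  fixes P X :: "complex^'n^'n"
  assumes posdef: "posdef P" and inv: "invertible X"
  shows "posdef (cadj X ** P ** X)"
proof -
  have "hermitian (cadj X ** P ** X)"
    using posdef by (simp add: posdef_def hermitian_def cadj_matrix_mult matrix_mul_assoc)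
  moreover have "Re (cinner x ((cadj X ** P ** X) *v x)) > 0" if "x \<noteq> 0" for x
  proof -
    have "X *v x \<noteq> 0"
      using that inv unfolding invertible_iff_kernel by blast
    moreover have "cinner x ((cadj X ** P ** X) *v x) = cinner (X *v x) (P *v (X *v x))"
      by (simp add: cinner_adjoint flip: matrix_vector_mul_assoc)
    ultimately show ?thesis
      using posdef by (simp add: posdef_def)
  qed
  ultimately show ?thesis
    by (simp add: posdef_def)
qed

lemma Pol_mult_hermitian:
  assumes "hermitian a" "hermitian r"
  shows "Pol (a ** r) = a ** r ** matrix_inv (msqrt (r ** (a ** a) ** r))"
  using assms by (simp add: Pol_def hermitian_def cadj_matrix_mult matrix_mul_assoc)

lemma square_congruence_cancel:
  fixes S r P :: "'a::field^'n^'n"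
  assumes SS: "S ** S = r ** P ** r" and "invertible S" "invertible r"
  shows "matrix_inv S ** r ** P = S ** matrix_inv r"
    and "P ** r ** matrix_inv S = matrix_inv r ** S"
proof -
  have "matrix_inv S ** r ** P = matrix_inv S ** (r ** P ** r) ** matrix_inv r"
    using assms by (simp add: matrix_mul_assoc[symmetric] matrix_inv_right)
  also have "\<dots> = (matrix_inv S ** S) ** S ** matrix_inv r"
    by (simp add: SS[symmetric] matrix_mul_assoc)
  finally show "matrix_inv S ** r ** P = S ** matrix_inv r"
    using assms by (simp add: matrix_inv_left)
  have "P ** r ** matrix_inv S = matrix_inv r ** (r ** P ** r) ** matrix_inv S"
    using assms by (simp add: matrix_mul_assoc matrix_inv_left)
  also have "\<dots> = matrix_inv r ** S ** (S ** matrix_inv S)"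
    by (simp add: SS[symmetric] matrix_mul_assoc)
  finally show "P ** r ** matrix_inv S = matrix_inv r ** S"
    using assms by (simp add: matrix_inv_right)
qed

definition vectorize :: "'a^'n^'m \<Rightarrow> 'a^('m \<times> 'n)" where
  "vectorize X = (\<chi> p. X $ fst p $ snd p)"

lemma kron_transpose_Omega: "kron A (transpose U) *v Omega = vectorize (A ** U)"
  by (simp add: vec_eq_iff kron_def Omega_def vectorize_def transpose_def matrix_vector_mult_def
      matrix_matrix_mult_def UNIV_Times_UNIV[symmetric] sum.cartesian_product'
      if_distrib[of "\<lambda>x. _ * x"] cong: if_cong del: UNIV_Times_UNIV)

lemma cinner_vectorize: "cinner (vectorize X) (vectorize Y) = trace (cadj X ** Y)"
proof -
  have "cinner (vectorize X) (vectorize Y) = (\<Sum>i\<in>UNIV. \<Sum>j\<in>UNIV. cnj (X $ i $ j) * Y $ i $ j)"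
    by (simp add: cinner_def vectorize_def UNIV_Times_UNIV[symmetric] sum.cartesian_product'
        del: UNIV_Times_UNIV)
  also have "\<dots> = trace (cadj X ** Y)"
    by (subst sum.swap) (simp add: trace_def matrix_matrix_mult_def)
  finally show ?thesis .
qed

theorem mainTheorem17:
  fixes P Q R :: "complex^'n^'n"
  assumes "posdef P" and "posdef Q" and "posdef R"
  shows "fidR R P Q =
    cinner (kron (msqrt P) (transpose (Pol (msqrt P ** msqrt R))) *v Omega)
           (kron (msqrt Q) (transpose (Pol (msqrt Q ** msqrt R))) *v Omega)"
proof -
  define a q r where "a = msqrt P" and "q = msqrt Q" and "r = msqrt R"
  define SP SQ where "SP = msqrt (r ** P ** r)" and "SQ = msqrt (r ** Q ** r)"
  have psd: "psd P" "psd Q" "psd R"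
    using assms by (simp_all add: posdef_imp_psd)
  have herm: "cadj a = a" "cadj q = q" "cadj r = r" and inv_r: "invertible r"
    using assms psd by (simp_all add: a_def q_def r_def hermitian_msqrt invertible_msqrt)
  have "posdef (r ** P ** r)" "posdef (r ** Q ** r)"
    using posdef_congruence[OF _ inv_r] assms herm by metis+
  then have SP: "SP ** SP = r ** P ** r" "invertible SP" "cadj SP = SP"
    and SQ: "SQ ** SQ = r ** Q ** r" "invertible SQ"
    by (simp_all add: SP_def SQ_def msqrt_square hermitian_msqrt posdef_imp_psd invertible_msqrt)
  have "cadj (a ** Pol (a ** r)) ** (q ** Pol (q ** r))
      = (matrix_inv SP ** r ** P) ** (Q ** r ** matrix_inv SQ)"
    using herm psd SP(2,3)
    by (simp add: Pol_mult_hermitian psd_def hermitian_def cadj_matrix_mult cadj_matrix_inv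
        matrix_mul_assoc a_def q_def msqrt_square flip: SP_def SQ_def)
  also have "\<dots> = SP ** matrix_inv R ** SQ"
    using square_congruence_cancel[OF SP(1,2) inv_r] square_congruence_cancel[OF SQ inv_r]
      matrix_inv_mult[OF inv_r inv_r] msqrt_square[OF psd(3)]
    by (simp add: r_def matrix_mul_assoc)
  finally show ?thesis
    by (simp add: fidR_def kron_transpose_Omega cinner_vectorize SP_def SQ_def a_def q_def r_def)
qed

end
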